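(* The two-dimensional subalgebras of ${\rm A}_3$ are exactly $\langle e_1,e_3\rangle$, $\langle e_1-e_2,e_3\rangle$, $\langle e_1,e_2\rangle$ and $\langle e_2,e_3\rangle$; up to automorphisms of ${\rm A}_3$ every two-dimensional subalgebra is equivalent to one of these four.
   Context: ${\rm A}_3$ is the complex algebra with basis $e_1,e_2,e_3$, unit $e_1$ ($e_1e_i=e_ie_1=e_i$), and $e_2e_2=e_2$; all other products of basis elements are zero. A subalgebra is a linear subspace closed under multiplication (it need not contain $e_1$). Equivalence up to automorphisms means one is mapped onto the other by an algebra automorphism. $\langle S\rangle$ denotes linear span. *)

theory Defs
  imports Complex_Main "HOL-Library.Product_Plus"
begin

text \<open>The algebra A3 is modelled on complex triples (a1,a2,a3) = a1 e1 + a2 e2 + a3 e3.\<close>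

type_synonym A3 = "complex \<times> complex \<times> complex"

definition sA :: "complex \<Rightarrow> A3 \<Rightarrow> A3" where
  "sA c x = (c * fst x, c * fst (snd x), c * snd (snd x))"

definition e1 :: A3 where "e1 = (1, 0, 0)"
definition e2 :: A3 where "e2 = (0, 1, 0)"
definition e3 :: A3 where "e3 = (0, 0, 1)"

text \<open>Multiplication: e1 unit, e2 e2 = e2, all other products of basis elements zero.\<close>
definition mulA :: "A3 \<Rightarrow> A3 \<Rightarrow> A3" where
  "mulA x y = (case x of (a1, a2, a3) \<Rightarrow> case y of (b1, b2, b3) \<Rightarrow>
      (a1 * b1, a1 * b2 + a2 * b1 + a2 * b2, a1 * b3 + a3 * b1))"

definition subalgA :: "A3 set \<Rightarrow> bool" where
  "subalgA S \<longleftrightarrow> module.subspace sA S \<and> (\<forall>x\<in>S. \<forall>y\<in>S. mulA x y \<in> S)"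

definition spanA :: "A3 set \<Rightarrow> A3 set" where
  "spanA X = module.span sA X"

definition dimA :: "A3 set \<Rightarrow> nat" where
  "dimA S = vector_space.dim sA S"

definition autA :: "(A3 \<Rightarrow> A3) \<Rightarrow> bool" where
  "autA f \<longleftrightarrow> Vector_Spaces.linear sA sA f \<and> bij f \<and> (\<forall>x y. f (mulA x y) = mulA (f x) (f y))"

lemma vector_space_sA: "vector_space sA"
  by unfold_locales (auto simp: sA_def algebra_simps)

end

(* A two-dimensional subspace spanned by u and v is the plane of all x with n . x = 0, where
   n = u \<times> v and n . x = n1 x1 + n2 x2 + n3 x3 (a bilinear pairing, no conjugation).
   Since A3 is commutative and 2 is invertible, a subspace is a subalgebra as soon as it is
   closed under squaring, and for x = (a, b, c) one has n . x\<^sup>2 = 2 a (n . x) + n2 b\<^sup>2 - n1 a\<^sup>2.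
   So the plane is a subalgebra iff n2 b\<^sup>2 = n1 a\<^sup>2 on it, which forces n to be a multiple of
   e1, e2, e3 or e1 + e2. As this list of subalgebras is complete, the identity automorphism
   already witnesses the second claim. *)

theory Submission
  imports Defs
begin

interpretation V: vector_space sA by (rule vector_space_sA)

lemma sA_triple [simp]: "sA c (x1, x2, x3) = (c * x1, c * x2, c * x3)"
  by (simp add: sA_def)

fun dotA :: "A3 \<Rightarrow> A3 \<Rightarrow> complex" where
  "dotA (n1, n2, n3) (x1, x2, x3) = n1 * x1 + n2 * x2 + n3 * x3"

fun cross :: "A3 \<Rightarrow> A3 \<Rightarrow> A3" where
  "cross (u1, u2, u3) (v1, v2, v3) = (u2 * v3 - u3 * v2, u3 * v1 - u1 * v3, u1 * v2 - u2 * v1)"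

lemma dotA_add: "dotA n (x + y) = dotA n x + dotA n y"
  by (cases n; cases x; cases y) (simp add: algebra_simps)

lemma dotA_scale: "dotA n (sA c x) = c * dotA n x" "dotA (sA c n) x = c * dotA n x"
  by (cases n; cases x; simp add: algebra_simps)+

lemma dotA_zero: "dotA n 0 = 0"
  by (cases n) (simp add: zero_prod_def)

definition plane :: "A3 \<Rightarrow> A3 set" where
  "plane n = {x. dotA n x = 0}"

lemma subspace_plane: "V.subspace (plane n)"
  unfolding V.subspace_def plane_def by (simp add: dotA_add dotA_scale dotA_zero)

lemma plane_scale: "c \<noteq> 0 \<Longrightarrow> plane (sA c n) = plane n"
  unfolding plane_def by (simp add: dotA_scale)

lemma dotA_cross_left: "dotA (cross u v) u = 0" and dotA_cross_right: "dotA (cross u v) v = 0"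
  by (cases u; cases v; simp add: algebra_simps)+

(* Cramer's rule, with det (u, v, w) written as dotA (cross u v) w. *)
lemma cramer_identity:
  "sA (dotA (cross u v) w) x
     = sA (dotA (cross x v) w) u + sA (dotA (cross u x) w) v + sA (dotA (cross u v) x) w"
  by (cases u; cases v; cases w; cases x) (simp add: algebra_simps)

lemma dotA_nonzero_exists: "n \<noteq> 0 \<Longrightarrow> \<exists>w. dotA n w \<noteq> 0"
  by (cases n) (metis dotA.simps mult_1_right mult_zero_right add_0 add_0_right zero_prod_def)

lemma span_pair_eq_plane:
  assumes "cross u v \<noteq> 0"
  shows "spanA {u, v} = plane (cross u v)"
proof
  show "spanA {u, v} \<subseteq> plane (cross u v)"
    unfolding spanA_def
    by (rule V.span_minimal[OF _ subspace_plane]) (simp add: plane_def dotA_cross_left dotA_cross_right)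
next
  show "plane (cross u v) \<subseteq> spanA {u, v}"
  proof
    fix x assume "x \<in> plane (cross u v)"
    then have x: "dotA (cross u v) x = 0" by (simp add: plane_def)
    obtain w where d: "dotA (cross u v) w \<noteq> 0" using dotA_nonzero_exists assms by blast
    define d where "d = dotA (cross u v) w"
    have "x = sA (1 / d) (sA d x)"
      using d by (simp add: d_def)
    also have "\<dots> = sA (1 / d) (sA (dotA (cross x v) w) u + sA (dotA (cross u x) w) v)"
      using cramer_identity[of u v w x] x by (simp add: d_def)
    finally have "x = sA (dotA (cross x v) w / d) u + sA (dotA (cross u x) w / d) v"
      by (simp add: V.scale_right_distrib)
    then show "x \<in> spanA {u, v}"
      unfolding spanA_def by (metis V.span_add V.span_base V.span_scale insertI1 insertI2 singletonI)
  qed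
qed

lemma cross_eq_0_iff: "cross u v = 0 \<longleftrightarrow> v = 0 \<or> (\<exists>c. u = sA c v)"
proof
  assume c0: "cross u v = 0"
  obtain u1 u2 u3 v1 v2 v3 where uv: "u = (u1, u2, u3)" "v = (v1, v2, v3)"
    by (cases u; cases v) auto
  have "v1 * u2 = u1 * v2" "v1 * u3 = u1 * v3" "v2 * u3 = u2 * v3"
    using c0 by (simp_all add: uv zero_prod_def algebra_simps)
  then have "u = sA (u1 / v1) v \<or> v1 = 0" "u = sA (u2 / v2) v \<or> v2 = 0" "u = sA (u3 / v3) v \<or> v3 = 0"
    by (auto simp: uv field_simps)
  then show "v = 0 \<or> (\<exists>c. u = sA c v)"
    by (metis uv(2) zero_prod_def)
next
  show "v = 0 \<or> (\<exists>c. u = sA c v) \<Longrightarrow> cross u v = 0"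
    by (cases u; cases v) (auto simp: zero_prod_def algebra_simps)
qed

lemma independent_pair_iff: "V.independent {u, v} \<and> u \<noteq> v \<longleftrightarrow> v \<noteq> 0 \<and> (\<forall>c. u \<noteq> sA c v)"
proof (cases "u = v")
  case True
  then show ?thesis by (metis V.scale_one)
next
  case False
  then show ?thesis by (auto simp: V.independent_insert V.span_singleton)
qed

lemma independent_pair_iff_cross: "V.independent {u, v} \<and> u \<noteq> v \<longleftrightarrow> cross u v \<noteq> 0"
  by (simp add: independent_pair_iff cross_eq_0_iff)

lemma dim_span_pair: "cross u v \<noteq> 0 \<Longrightarrow> dimA (spanA {u, v}) = 2"
  unfolding dimA_def spanA_def using independent_pair_iff_cross[of u v]
  by (simp add: V.dim_eq_card_independent)

lemma dim2_subspace_eq_span_pair: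
  assumes "V.subspace S" "dimA S = 2"
  obtains u v where "cross u v \<noteq> 0" "S = spanA {u, v}"
proof -
  obtain B where B: "B \<subseteq> S" "V.independent B" "S \<subseteq> V.span B" "card B = 2"
    using V.basis_exists assms(2) unfolding dimA_def by metis
  then obtain u v where "B = {u, v}" "u \<noteq> v" by (auto simp: card_2_iff)
  with B assms(1) show thesis
    using that independent_pair_iff_cross V.span_subspace unfolding spanA_def by metis
qed

lemma mulA_commute: "mulA x y = mulA y x"
  by (cases x; cases y) (simp add: mulA_def algebra_simps)

lemma mulA_polarization: "mulA x y = sA (1 / 2) (mulA (x + y) (x + y) - mulA x x - mulA y y)"
  by (cases x; cases y) (simp add: mulA_def field_simps)

lemma subalgA_iff_squares:
  assumes "V.subspace S"
  shows "subalgA S \<longleftrightarrow> (\<forall>x\<in>S. mulA x x \<in> S)"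
  using assms unfolding subalgA_def
  by (metis mulA_polarization V.subspace_add V.subspace_diff V.subspace_scale)

lemma dotA_square:
  "dotA (n1, n2, n3) (mulA (a, b, c) (a, b, c))
     = 2 * a * dotA (n1, n2, n3) (a, b, c) + n2 * b\<^sup>2 - n1 * a\<^sup>2"
  by (simp add: mulA_def algebra_simps power2_eq_square)

lemma subalgA_plane_iff:
  "subalgA (plane (n1, n2, n3)) \<longleftrightarrow> (\<forall>a b c. n1 * a + n2 * b + n3 * c = 0 \<longrightarrow> n2 * b\<^sup>2 = n1 * a\<^sup>2)"
  unfolding subalgA_iff_squares[OF subspace_plane]
  by (simp add: plane_def dotA_square)

lemma plane_square_closed_cases:
  assumes n: "(n1, n2, n3) \<noteq> 0"
    and sq: "\<forall>a b c. n1 * a + n2 * b + n3 * c = 0 \<longrightarrow> n2 * b\<^sup>2 = n1 * a\<^sup>2"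
  shows "plane (n1, n2, n3) \<in> {plane e2, plane (e1 + e2), plane e3, plane e1}"
proof -
  consider "n3 \<noteq> 0" | "n3 = 0" "n2 \<noteq> 0" | "n3 = 0" "n2 = 0" "n1 \<noteq> 0"
    using n by (auto simp: zero_prod_def)
  then show ?thesis
  proof cases
    case 1
    have "n1 * n3\<^sup>2 = 0" "n2 * n3\<^sup>2 = 0"
      using sq[rule_format, of n3 0 "- n1"] sq[rule_format, of 0 n3 "- n2"] by (simp_all add: algebra_simps)
    with 1 have "(n1, n2, n3) = sA n3 e3" by (simp add: e3_def)
    then show ?thesis using 1 plane_scale by simp
  next
    case 2
    have "n1 * n2 * (n1 - n2) = 0"
      using 2 sq[rule_format, of n2 "- n1" 0] by (simp add: algebra_simps power2_eq_square)
    with 2 have "(n1, n2, n3) = sA n2 e2 \<or> (n1, n2, n3) = sA n2 (e1 + e2)"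
      by (auto simp: e1_def e2_def)
    then have "plane (n1, n2, n3) = plane e2 \<or> plane (n1, n2, n3) = plane (e1 + e2)"
      using 2 by (metis plane_scale)
    then show ?thesis by blast
  next
    case 3
    then have "(n1, n2, n3) = sA n1 e1" by (simp add: e1_def)
    then show ?thesis using 3 plane_scale by simp
  qed
qed

lemma standard_spans:
  "spanA {e1, e3} = plane e2" "spanA {e1 - e2, e3} = plane (e1 + e2)"
  "spanA {e1, e2} = plane e3" "spanA {e2, e3} = plane e1"
  using span_pair_eq_plane[of e1 e3] plane_scale[of "- 1" e2]
    span_pair_eq_plane[of "e1 - e2" e3] plane_scale[of "- 1" "e1 + e2"]
    span_pair_eq_plane[of e1 e2] span_pair_eq_plane[of e2 e3]
  by (simp_all add: e1_def e2_def e3_def zero_prod_def)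

lemma subalgA_standard_planes:
  "subalgA (plane e2)" "subalgA (plane (e1 + e2))" "subalgA (plane e3)" "subalgA (plane e1)"
  by (simp_all add: subalgA_plane_iff e1_def e2_def e3_def add_eq_0_iff)

lemma dim_standard_planes:
  "dimA (plane e2) = 2" "dimA (plane (e1 + e2)) = 2" "dimA (plane e3) = 2" "dimA (plane e1) = 2"
  unfolding standard_spans[symmetric]
  by (rule dim_span_pair; simp add: e1_def e2_def e3_def zero_prod_def)+

lemma subalgA_dim2_iff:
  "subalgA S \<and> dimA S = 2 \<longleftrightarrow> S \<in> {plane e2, plane (e1 + e2), plane e3, plane e1}"
proof
  assume S: "subalgA S \<and> dimA S = 2"
  then obtain u v where uv: "cross u v \<noteq> 0" "S = spanA {u, v}"
    using dim2_subspace_eq_span_pair subalgA_def by metis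
  obtain n1 n2 n3 where n: "cross u v = (n1, n2, n3)" by (cases "cross u v") auto
  have "S = plane (n1, n2, n3)" using uv span_pair_eq_plane n by simp
  with S uv(1) n show "S \<in> {plane e2, plane (e1 + e2), plane e3, plane e1}"
    using plane_square_closed_cases subalgA_plane_iff by simp
next
  show "S \<in> {plane e2, plane (e1 + e2), plane e3, plane e1} \<Longrightarrow> subalgA S \<and> dimA S = 2"
    using subalgA_standard_planes dim_standard_planes by auto
qed

lemma autA_id: "autA id"
  unfolding autA_def by (simp add: V.linear_id)

theorem mainTheorem9:
  shows "(\<forall>S. (subalgA S \<and> dimA S = 2) \<longleftrightarrow>
            S \<in> {spanA {e1, e3}, spanA {e1 - e2, e3}, spanA {e1, e2}, spanA {e2, e3}})
       \<and> (\<forall>S. subalgA S \<and> dimA S = 2 \<longrightarrow>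
            (\<exists>f T. autA f \<and> T \<in> {spanA {e1, e3}, spanA {e1 - e2, e3}, spanA {e1, e2}, spanA {e2, e3}}
                   \<and> f ` S = T))"
proof -
  have classification: "subalgA S \<and> dimA S = 2 \<longleftrightarrow>
      S \<in> {spanA {e1, e3}, spanA {e1 - e2, e3}, spanA {e1, e2}, spanA {e2, e3}}" for S
    unfolding standard_spans by (rule subalgA_dim2_iff)
  moreover have "\<exists>f T. autA f \<and> T \<in> {spanA {e1, e3}, spanA {e1 - e2, e3}, spanA {e1, e2}, spanA {e2, e3}}
      \<and> f ` S = T" if "subalgA S \<and> dimA S = 2" for S
    using that classification autA_id by (intro exI[of _ id] exI[of _ S]) simp
  ultimately show ?thesis by blast
qed

end
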